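(* Let $\beta,\kappa>0$ and $V$ as in the context, and suppose there exist $\beta'\in(0,\beta)$ and $C_1>0$ with $V(x)\ge\kappa|x|^{-2-2\beta}-C_1|x|^{-2-\beta'}$ for all $0<|x|\le1$. Then for all $t>0$, $R\in\big(0,(\kappa/(4C_1))^{1/(2\beta-\beta')}\wedge1\big]$ and $x,y\in\mathbb{R}^d_0$ with $|x|\vee|y|<R$, $$\limsup_{\delta\to0}\frac{\mathbb{P}_x(X_t\in B(y,\delta),\,\tau_{B(0,R)}>t)}{|B(0,\delta)|}\le(4\pi t)^{-d/2}\exp\Big(-\frac{|x-y|^2}{4t}-\frac{3\kappa t}{4R^{2+2\beta}}\Big).$$ In particular, $\sup_{x\in B(0,R)\setminus\{0\}}\mathbb{P}_x(\tau_{B(0,R)}>t)\le\exp\big(-\frac{3\kappa t}{4R^{2+2\beta}}\big)$.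
   Context: $d\ge1$, $\mathbb{R}^d_0:=\mathbb{R}^d\setminus\{0\}$; $V$ is a non-negative locally bounded Borel function on $\mathbb{R}^d_0$ with $\sup_{|x|\ge1}V(x)<\infty$ and $\int_{B(0,1)\setminus\{0\}}V(x)dx=\infty$. $X$ is the process on $\mathbb{R}^d_0$ with semigroup $P_tf(x)=\mathbb{E}_x[e^{-\int_0^tV(W_s)ds}f(W_t);\,t<\tau^W_{\mathbb{R}^d_0}]$, $W$ Brownian motion with generator $\Delta$; $\tau_U:=\inf\{t>0:X_t\notin U\}$; $|A|$ is Lebesgue measure. *)

theory Defs
  imports "HOL-Probability.Probability"
begin

text \<open>Heat kernel of the Brownian motion with generator the Laplacian
  (covariance 2t times identity) on a Euclidean space of dimension DIM('a).\<close>
definition heat_kernel :: "real \<Rightarrow> 'a::euclidean_space \<Rightarrow> real" where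
  "heat_kernel t z = (4 * pi * t) powr (- real DIM('a) / 2) * exp (- (norm z)\<^sup>2 / (4 * t))"

definition brownian_motion :: "'w measure \<Rightarrow> (real \<Rightarrow> 'w \<Rightarrow> 'a::euclidean_space) \<Rightarrow> bool" where
  "brownian_motion M B \<longleftrightarrow>
     prob_space M \<and>
     (\<forall>t. B t \<in> borel_measurable M) \<and>
     (\<forall>\<omega>\<in>space M. B 0 \<omega> = 0) \<and>
     (\<forall>\<omega>\<in>space M. continuous_on {0..} (\<lambda>t. B t \<omega>)) \<and>
     (\<forall>s t. 0 \<le> s \<and> s < t \<longrightarrow>
        distributed M lborel (\<lambda>\<omega>. B t \<omega> - B s \<omega>) (\<lambda>z. ennreal (heat_kernel (t - s) z))) \<and>
     (\<forall>(ts :: nat \<Rightarrow> real) n. 0 \<le> ts 0 \<and> (\<forall>i<n. ts i < ts (Suc i)) \<longrightarrow>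
        prob_space.indep_vars M (\<lambda>_. borel) (\<lambda>i \<omega>. B (ts (Suc i)) \<omega> - B (ts i) \<omega>) {..<n})"

definition admissible_potential :: "('a::euclidean_space \<Rightarrow> real) \<Rightarrow> bool" where
  "admissible_potential V \<longleftrightarrow>
     (\<forall>x. x \<noteq> 0 \<longrightarrow> 0 \<le> V x) \<and>
     V \<in> borel_measurable borel \<and>
     (\<forall>K. compact K \<and> K \<subseteq> - {0} \<longrightarrow> bounded (V ` K)) \<and>
     bdd_above (V ` {x. 1 \<le> norm x}) \<and>
     (\<integral>\<^sup>+ x\<in>ball 0 1 - {0}. ennreal (V x) \<partial>lborel) = \<infinity>"

text \<open>killed_prob M B V t x A U = P_x(X_t \<in> A, \<tau>_U > t) for the process X
  obtained from the Brownian motion x + B, killed on hitting 0 and killed at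
  rate V (Feynman--Kac):
  E[ exp(- int_0^t V(x+B_s) ds) ; x+B_s \<in> U - {0} for all s \<in> [0,t], x + B_t \<in> A ].\<close>
definition killed_prob ::
  "'w measure \<Rightarrow> (real \<Rightarrow> 'w \<Rightarrow> 'a::euclidean_space) \<Rightarrow> ('a \<Rightarrow> real) \<Rightarrow> real \<Rightarrow> 'a \<Rightarrow> 'a set \<Rightarrow> 'a set \<Rightarrow> real" where
  "killed_prob M B V t x A U =
     (\<integral>\<omega>. (if (\<forall>s\<in>{0..t}. x + B s \<omega> \<in> U - {0}) \<and> x + B t \<omega> \<in> A
            then exp (- (\<integral>s\<in>{0..t}. V (x + B s \<omega>) \<partial>lborel)) else 0) \<partial>M)"

end

theory Submission
  imports Defs
begin

text \<open>If \<open>R^(2\<beta>-\<beta>') \<le> \<kappa>/(4C\<^sub>1)\<close>, the negative term in the lower bound on \<open>V\<close> is at most a quarter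
  of the leading one on the punctured ball \<open>B(0,R)\<close>, so \<open>V \<ge> m := 3\<kappa>/(4R^(2+2\<beta>))\<close> there. A path
  that stays in the punctured ball up to time \<open>t\<close> thus has Feynman--Kac weight at most \<open>exp(-mt)\<close>,
  so the killed transition probability is at most \<open>exp(-mt)\<close> times the free Brownian one, whose
  density at \<open>y\<close> is the heat kernel \<open>(4\<pi>t)^(-d/2) exp(-|x-y|\<^sup>2/4t)\<close>.\<close>

lemma potential_ge_on_small_ball:
  fixes V :: "'a::real_normed_vector \<Rightarrow> real"
  assumes \<beta>: "0 < \<beta>" "\<beta>' < \<beta>" and \<kappa>: "0 < \<kappa>" and C1: "0 < C\<^sub>1"
    and Vlow: "\<And>x. 0 < norm x \<Longrightarrow> norm x \<le> 1 \<Longrightarrow>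
                 V x \<ge> \<kappa> * norm x powr (-2 - 2 * \<beta>) - C\<^sub>1 * norm x powr (-2 - \<beta>')"
    and R: "R \<le> min ((\<kappa> / (4 * C\<^sub>1)) powr (1 / (2 * \<beta> - \<beta>'))) 1"
    and z: "z \<noteq> 0" "norm z < R"
  shows "3 * \<kappa> / (4 * R powr (2 + 2 * \<beta>)) \<le> V z"
proof -
  define r where "r = norm z"
  have r: "0 < r" "r < R" "r \<le> 1" using z R by (auto simp: r_def)
  have gap: "0 < 2 * \<beta> - \<beta>'" using \<beta> by simp
  have "r powr (2 * \<beta> - \<beta>') \<le> R powr (2 * \<beta> - \<beta>')"
    using r gap by (intro powr_mono2) auto
  also have "\<dots> \<le> ((\<kappa> / (4 * C\<^sub>1)) powr (1 / (2 * \<beta> - \<beta>'))) powr (2 * \<beta> - \<beta>')"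
    using r R gap by (intro powr_mono2) auto
  also have "\<dots> = \<kappa> / (4 * C\<^sub>1)"
    using gap \<kappa> C1 by (simp add: powr_powr)
  finally have "C\<^sub>1 * r powr (2 * \<beta> - \<beta>') \<le> \<kappa> / 4"
    using C1 by (simp add: field_simps)
  then have "C\<^sub>1 * r powr (2 * \<beta> - \<beta>') * r powr (-2 - 2 * \<beta>) \<le> \<kappa> / 4 * r powr (-2 - 2 * \<beta>)"
    by (rule mult_right_mono) simp
  moreover have "r powr (2 * \<beta> - \<beta>') * r powr (-2 - 2 * \<beta>) = r powr (-2 - \<beta>')"
    unfolding powr_add[symmetric] by (rule arg_cong[where f = "(powr) r"]) simp
  ultimately have "C\<^sub>1 * r powr (-2 - \<beta>') \<le> \<kappa> / 4 * r powr (-2 - 2 * \<beta>)"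
    by (simp add: mult.assoc)
  then have "3 * \<kappa> / 4 * r powr (-2 - 2 * \<beta>) \<le> V z"
    using Vlow[of z] r by (simp add: r_def)
  moreover have "3 * \<kappa> / 4 * R powr (-2 - 2 * \<beta>) \<le> 3 * \<kappa> / 4 * r powr (-2 - 2 * \<beta>)"
    using r \<beta> \<kappa> by (intro mult_left_mono powr_mono2') auto
  ultimately have "3 * \<kappa> / 4 * R powr (-2 - 2 * \<beta>) \<le> V z"
    by linarith
  moreover have "R powr (-2 - 2 * \<beta>) = 1 / R powr (2 + 2 * \<beta>)"
    using powr_minus_divide[of R "2 + 2 * \<beta>"] by simp
  ultimately show ?thesis
    by simp
qed

lemma set_integral_comp_path_ge:
  fixes V :: "'a::topological_space \<Rightarrow> real" and q :: "real \<Rightarrow> 'a"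
  assumes V: "V \<in> borel_measurable borel" and q: "continuous_on {0..t} q" and t: "0 \<le> t"
    and bounded: "bounded (V ` q ` {0..t})"
    and m: "\<forall>s\<in>{0..t}. m \<le> V (q s)"
  shows "m * t \<le> (\<integral>s\<in>{0..t}. V (q s) \<partial>lborel)"
proof -
  define q' where "q' s = q (max 0 (min s t))" for s
  have q'_eq: "q' s = q s" if "s \<in> {0..t}" for s
    using that by (simp add: q'_def)
  have "continuous_on UNIV q'"
    unfolding q'_def
    by (rule continuous_on_compose2[OF q]) (use t in \<open>auto intro!: continuous_intros\<close>)
  then have "(\<lambda>s. V (q' s)) \<in> borel_measurable borel"
    using measurable_compose[OF borel_measurable_continuous_onI V] by blast
  \<comment> \<open>Boundedness gives integrability; a non-integrable integrand would have integral 0.\<close>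
  moreover obtain b where b: "\<And>s. s \<in> {0..t} \<Longrightarrow> norm (V (q s)) \<le> b"
    using bounded unfolding bounded_iff by blast
  ultimately have integrable: "set_integrable lborel {0..t} (\<lambda>s. V (q' s))"
    unfolding set_integrable_def using q'_eq
    by (intro integrableI_bounded_set[where A = "{0..t}" and B = b])
       (auto simp: indicator_def emeasure_lborel_Icc_eq)
  have "m * t = (\<integral>s\<in>{0..t}. m \<partial>lborel)"
    using t by (simp add: set_integral_const)
  also have "\<dots> \<le> (\<integral>s\<in>{0..t}. V (q' s) \<partial>lborel)"
    using m q'_eq
    by (intro set_integral_mono[OF _ integrable])
       (auto simp: set_integrable_def emeasure_lborel_Icc_eq)
  also have "\<dots> = (\<integral>s\<in>{0..t}. V (q s) \<partial>lborel)"
    using q'_eq by (intro set_lebesgue_integral_cong) auto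
  finally show ?thesis .
qed

lemma killed_prob_le_exp_mult_prob:
  fixes B :: "real \<Rightarrow> 'w \<Rightarrow> 'a::euclidean_space"
  assumes M: "finite_measure M" and Bt: "B t \<in> borel_measurable M"
    and paths: "\<forall>\<omega>\<in>space M. continuous_on {0..t} (\<lambda>s. B s \<omega>)"
    and V: "admissible_potential V" and t: "0 \<le> t" and A: "A \<in> sets borel"
    and m: "\<forall>z\<in>U - {0}. m \<le> V z"
  shows "killed_prob M B V t x A U \<le> exp (- m * t) * measure M {\<omega> \<in> space M. x + B t \<omega> \<in> A}"
proof -
  have V_borel: "V \<in> borel_measurable borel"
    and V_bounded: "\<And>K. compact K \<Longrightarrow> K \<subseteq> - {0} \<Longrightarrow> bounded (V ` K)"
    using V unfolding admissible_potential_def by auto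
  define S where "S = {\<omega> \<in> space M. x + B t \<omega> \<in> A}"
  have "S = (\<lambda>\<omega>. x + B t \<omega>) -` A \<inter> space M"
    by (auto simp: S_def)
  then have S: "S \<in> sets M"
    using Bt A by simp
  have weight: "exp (- (\<integral>s\<in>{0..t}. V (x + B s \<omega>) \<partial>lborel)) \<le> exp (- m * t)"
    if \<omega>: "\<omega> \<in> space M" and stays: "\<forall>s\<in>{0..t}. x + B s \<omega> \<in> U - {0}" for \<omega>
  proof -
    have path: "continuous_on {0..t} (\<lambda>s. x + B s \<omega>)"
      using paths \<omega> by (intro continuous_intros) auto
    have "compact ((\<lambda>s. x + B s \<omega>) ` {0..t})" and "(\<lambda>s. x + B s \<omega>) ` {0..t} \<subseteq> - {0}"
      using compact_continuous_image[OF path] stays by auto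
    then have "bounded (V ` (\<lambda>s. x + B s \<omega>) ` {0..t})"
      by (rule V_bounded)
    then have "m * t \<le> (\<integral>s\<in>{0..t}. V (x + B s \<omega>) \<partial>lborel)"
      by (rule set_integral_comp_path_ge[OF V_borel path t]) (use m stays in auto)
    then show ?thesis
      by simp
  qed
  define f where "f = (\<lambda>\<omega>. if (\<forall>s\<in>{0..t}. x + B s \<omega> \<in> U - {0}) \<and> x + B t \<omega> \<in> A
            then exp (- (\<integral>s\<in>{0..t}. V (x + B s \<omega>) \<partial>lborel)) else 0)"
  have killed_prob_eq: "killed_prob M B V t x A U = integral\<^sup>L M f"
    by (simp only: killed_prob_def f_def)
  have f_le: "f \<omega> \<le> exp (- m * t) * indicator S \<omega>" if "\<omega> \<in> space M" for \<omega>
    using weight[OF that] that by (auto simp: f_def S_def indicator_def)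
  show ?thesis
  proof (cases "integrable M f")
    case True
    have "integral\<^sup>L M f \<le> (\<integral>\<omega>. exp (- m * t) * indicator S \<omega> \<partial>M)"
      using True S f_le finite_measure.emeasure_finite[OF M, of S]
      by (intro integral_mono integrable_mult_right integrable_real_indicator)
         (auto simp: less_top)
    then show ?thesis
      using S by (simp add: killed_prob_eq S_def)
  next
    case False
    then show ?thesis
      by (simp add: killed_prob_eq not_integrable_integral_eq)
  qed
qed

lemma Limsup_measure_ball_over_volume_le_density:
  fixes X :: "'w \<Rightarrow> 'a::euclidean_space" and f :: "'a \<Rightarrow> real"
  assumes X: "distributed M lborel X (\<lambda>z. ennreal (f z))"
    and f: "isCont f p" "0 \<le> f p"
  shows "Limsup (at_right 0)
           (\<lambda>\<delta>. ereal (measure M (X -` ball p \<delta> \<inter> space M) / measure lebesgue (ball (0::'a) \<delta>)))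
         \<le> ereal (f p)"
proof (rule ereal_le_epsilon2)
  fix e :: real
  assume e: "0 < e"
  obtain d where d: "0 < d" "\<And>z. dist z p < d \<Longrightarrow> f z \<le> f p + e"
    using f(1) e unfolding continuous_at_eps_delta
    by (metis dist_real_def abs_diff_less_iff less_eq_real_def)
  have "measure M (X -` ball p \<delta> \<inter> space M) / measure lebesgue (ball (0::'a) \<delta>) \<le> f p + e"
    if \<delta>: "0 < \<delta>" "\<delta> < d" for \<delta>
  proof -
    have "ennreal (f z) * indicator (ball p \<delta>) z \<le> ennreal (f p + e) * indicator (ball p \<delta>) z" for z
      using d(2)[of z] \<delta> by (auto simp: indicator_def dist_commute intro: ennreal_leI)
    then have "emeasure M (X -` ball p \<delta> \<inter> space M) \<le> ennreal (f p + e) * emeasure lborel (ball p \<delta>)"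
      using distributed_emeasure[OF X, of "ball p \<delta>"]
      by (auto simp: nn_integral_cmult_indicator[symmetric] intro!: nn_integral_mono)
    also have "\<dots> = ennreal ((f p + e) * measure lborel (ball p \<delta>))"
      using f(2) e emeasure_lborel_ball_finite[of p \<delta>]
      by (simp add: emeasure_eq_ennreal_measure ennreal_mult)
    finally have "measure M (X -` ball p \<delta> \<inter> space M) \<le> (f p + e) * measure lborel (ball p \<delta>)"
      unfolding measure_def using f(2) e by (intro enn2real_leI) auto
    moreover have "measure lebesgue (ball (0::'a) \<delta>) = measure lborel (ball p \<delta>)"
      using \<delta> by (simp add: content_ball)
    moreover have "0 < measure lborel (ball p \<delta>)"
      using \<delta> by simp
    ultimately show ?thesis
      by (simp add: divide_le_eq)
  qed
  then have "\<forall>\<^sub>F \<delta> in at_right 0.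
      ereal (measure M (X -` ball p \<delta> \<inter> space M) / measure lebesgue (ball (0::'a) \<delta>)) \<le> ereal (f p + e)"
    unfolding eventually_at_right_field using d(1) by (intro exI[of _ d]) auto
  then show "Limsup (at_right 0)
           (\<lambda>\<delta>. ereal (measure M (X -` ball p \<delta> \<inter> space M) / measure lebesgue (ball (0::'a) \<delta>)))
         \<le> ereal (f p) + ereal e"
    by (simp add: Limsup_bounded)
qed

lemma heat_kernel_nonneg: "0 \<le> heat_kernel t z"
  by (simp add: heat_kernel_def)

lemma isCont_heat_kernel: "0 < t \<Longrightarrow> isCont (heat_kernel t) z"
  unfolding heat_kernel_def[abs_def] by (intro continuous_intros) auto

lemma brownian_motion_distributed:
  assumes "brownian_motion M B" "0 < t"
  shows "distributed M lborel (\<lambda>\<omega>. B t \<omega> - B 0 \<omega>) (\<lambda>z. ennreal (heat_kernel t z))"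
proof -
  have "\<forall>s t. 0 \<le> s \<and> s < t \<longrightarrow>
      distributed M lborel (\<lambda>\<omega>. B t \<omega> - B s \<omega>) (\<lambda>z. ennreal (heat_kernel (t - s) z))"
    using assms(1) unfolding brownian_motion_def by blast
  then show ?thesis
    using assms(2) by (metis diff_zero order_refl)
qed

lemma brownian_motion_killed_prob_le:
  fixes B :: "real \<Rightarrow> 'w \<Rightarrow> 'a::euclidean_space"
  assumes BM: "brownian_motion M B" and V: "admissible_potential V" and t: "0 \<le> t"
    and A: "A \<in> sets borel" and m: "\<forall>z\<in>U - {0}. m \<le> V z"
  shows "killed_prob M B V t x A U \<le> exp (- m * t) * measure M {\<omega> \<in> space M. x + B t \<omega> \<in> A}"
proof (rule killed_prob_le_exp_mult_prob[OF _ _ _ V t A m])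
  show "finite_measure M" and "B t \<in> borel_measurable M"
    using BM unfolding brownian_motion_def by (auto intro: prob_space.finite_measure)
  show "\<forall>\<omega>\<in>space M. continuous_on {0..t} (\<lambda>s. B s \<omega>)"
    using BM unfolding brownian_motion_def by (auto intro: continuous_on_subset[of "{0..}"])
qed

lemma brownian_motion_killed_survival_le:
  fixes B :: "real \<Rightarrow> 'w \<Rightarrow> 'a::euclidean_space"
  assumes BM: "brownian_motion M B" and V: "admissible_potential V" and t: "0 \<le> t"
    and m: "\<forall>z\<in>U - {0}. m \<le> V z"
  shows "killed_prob M B V t x UNIV U \<le> exp (- m * t)"
proof -
  have "prob_space M"
    using BM by (simp add: brownian_motion_def)
  then show ?thesis
    using brownian_motion_killed_prob_le[OF BM V t _ m, of UNIV x] by (simp add: prob_space.prob_space)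
qed

lemma brownian_motion_Limsup_killed_density_le:
  fixes B :: "real \<Rightarrow> 'w \<Rightarrow> 'a::euclidean_space"
  assumes BM: "brownian_motion M B" and V: "admissible_potential V" and t: "0 < t"
    and m: "\<forall>z\<in>U - {0}. m \<le> V z"
  shows "Limsup (at_right 0)
           (\<lambda>\<delta>. ereal (killed_prob M B V t x (ball y \<delta>) U / measure lebesgue (ball (0::'a) \<delta>)))
         \<le> ereal (exp (- m * t) * heat_kernel t (y - x))"
proof -
  define P where "P \<delta> = measure M ((\<lambda>\<omega>. B t \<omega> - B 0 \<omega>) -` ball (y - x) \<delta> \<inter> space M)
      / measure lebesgue (ball (0::'a) \<delta>)" for \<delta>
  have "killed_prob M B V t x (ball y \<delta>) U / measure lebesgue (ball (0::'a) \<delta>) \<le> exp (- m * t) * P \<delta>"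
    for \<delta>
  proof -
    have "{\<omega> \<in> space M. x + B t \<omega> \<in> ball y \<delta>} = (\<lambda>\<omega>. B t \<omega> - B 0 \<omega>) -` ball (y - x) \<delta> \<inter> space M"
      using BM by (auto simp: brownian_motion_def dist_norm algebra_simps)
    then show ?thesis
      using brownian_motion_killed_prob_le[OF BM V _ _ m, of t "ball y \<delta>" x] t
      by (auto simp: P_def intro: divide_right_mono)
  qed
  then have "Limsup (at_right 0)
      (\<lambda>\<delta>. ereal (killed_prob M B V t x (ball y \<delta>) U / measure lebesgue (ball (0::'a) \<delta>)))
      \<le> Limsup (at_right 0) (\<lambda>\<delta>. ereal (exp (- m * t)) * ereal (P \<delta>))"
    by (intro Limsup_mono always_eventually) simp
  also have "\<dots> = ereal (exp (- m * t)) * Limsup (at_right 0) (\<lambda>\<delta>. ereal (P \<delta>))"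
    by (rule Limsup_ereal_mult_left) auto
  also have "\<dots> \<le> ereal (exp (- m * t)) * ereal (heat_kernel t (y - x))"
    unfolding P_def using t
    by (intro ereal_mult_left_mono Limsup_measure_ball_over_volume_le_density
        brownian_motion_distributed[OF BM] isCont_heat_kernel heat_kernel_nonneg) auto
  finally show ?thesis
    by simp
qed

theorem lemma3p7:
  fixes M :: "'w measure" and B :: "real \<Rightarrow> 'w \<Rightarrow> 'a::euclidean_space"
    and V :: "'a \<Rightarrow> real" and \<beta> \<kappa> \<beta>' C\<^sub>1 :: real
  assumes BM: "brownian_motion M B"
    and V: "admissible_potential V"
    and \<beta>: "\<beta> > 0" and \<kappa>: "\<kappa> > 0"
    and \<beta>': "0 < \<beta>'" "\<beta>' < \<beta>" and C1: "C\<^sub>1 > 0"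
    and Vlow: "\<And>x. 0 < norm x \<Longrightarrow> norm x \<le> 1 \<Longrightarrow>
                 V x \<ge> \<kappa> * norm x powr (-2 - 2 * \<beta>) - C\<^sub>1 * norm x powr (-2 - \<beta>')"
  shows "(\<forall>t R x y. t > 0 \<longrightarrow> 0 < R \<longrightarrow>
            R \<le> min ((\<kappa> / (4 * C\<^sub>1)) powr (1 / (2 * \<beta> - \<beta>'))) 1 \<longrightarrow>
            x \<noteq> 0 \<longrightarrow> y \<noteq> 0 \<longrightarrow> max (norm x) (norm y) < R \<longrightarrow>
            Limsup (at_right 0)
              (\<lambda>\<delta>. ereal (killed_prob M B V t x (ball y \<delta>) (ball 0 R)
                           / measure lebesgue (ball (0::'a) \<delta>)))
            \<le> ereal ((4 * pi * t) powr (- real DIM('a) / 2)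
                     * exp (- (norm (x - y))\<^sup>2 / (4 * t) - 3 * \<kappa> * t / (4 * R powr (2 + 2 * \<beta>)))))
       \<and> (\<forall>t R. t > 0 \<longrightarrow> 0 < R \<longrightarrow>
            R \<le> min ((\<kappa> / (4 * C\<^sub>1)) powr (1 / (2 * \<beta> - \<beta>'))) 1 \<longrightarrow>
            (\<forall>x\<in>ball 0 R - {0}. killed_prob M B V t x UNIV (ball 0 R)
                \<le> exp (- 3 * \<kappa> * t / (4 * R powr (2 + 2 * \<beta>)))))"
proof -
  have lower: "\<forall>z\<in>ball 0 R - {0}. 3 * \<kappa> / (4 * R powr (2 + 2 * \<beta>)) \<le> V z"
    if "R \<le> min ((\<kappa> / (4 * C\<^sub>1)) powr (1 / (2 * \<beta> - \<beta>'))) 1" for R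
    using potential_ge_on_small_ball[OF \<beta> \<beta>'(2) \<kappa> C1 Vlow that] by simp
  show ?thesis
  proof (intro conjI allI impI ballI)
    fix t R :: real and x y :: 'a
    assume t: "t > 0" and R: "R \<le> min ((\<kappa> / (4 * C\<^sub>1)) powr (1 / (2 * \<beta> - \<beta>'))) 1"
    have "Limsup (at_right 0)
        (\<lambda>\<delta>. ereal (killed_prob M B V t x (ball y \<delta>) (ball 0 R) / measure lebesgue (ball (0::'a) \<delta>)))
        \<le> ereal (exp (- (3 * \<kappa> / (4 * R powr (2 + 2 * \<beta>))) * t) * heat_kernel t (y - x))"
      by (rule brownian_motion_Limsup_killed_density_le[OF BM V t lower[OF R]])
    also have "\<dots> = ereal ((4 * pi * t) powr (- real DIM('a) / 2)
                 * exp (- (norm (x - y))\<^sup>2 / (4 * t) - 3 * \<kappa> * t / (4 * R powr (2 + 2 * \<beta>))))"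
      unfolding heat_kernel_def
      by (simp add: norm_minus_commute mult.left_commute exp_add[symmetric] algebra_simps)
    finally show "Limsup (at_right 0)
        (\<lambda>\<delta>. ereal (killed_prob M B V t x (ball y \<delta>) (ball 0 R) / measure lebesgue (ball (0::'a) \<delta>)))
        \<le> ereal ((4 * pi * t) powr (- real DIM('a) / 2)
                 * exp (- (norm (x - y))\<^sup>2 / (4 * t) - 3 * \<kappa> * t / (4 * R powr (2 + 2 * \<beta>))))" .
  next
    fix t R :: real and x :: 'a
    assume "t > 0" and R: "R \<le> min ((\<kappa> / (4 * C\<^sub>1)) powr (1 / (2 * \<beta> - \<beta>'))) 1"
    then show "killed_prob M B V t x UNIV (ball 0 R) \<le> exp (- 3 * \<kappa> * t / (4 * R powr (2 + 2 * \<beta>)))"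
      using brownian_motion_killed_survival_le[OF BM V _ lower[OF R]] by simp
  qed
qed

end
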